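(* Let $\Sigma$ be a non-orientable surface (possibly with boundary), let $D\subset\Sigma$ be an oriented diagram of a pseudo-classical knot in $\Sigma\times[0,1]$ with a labeling of its $2$-cabling $D^2$, and let $x$ be a crossing of $D$. Then: (1) Reversing the orientation of $D$, and also relabeling $D^2$, each turns the positive smoothing at $x$ into the negative one and vice versa, regardless of whether $x$ is of type $1$ or type $2$. (2) The crossing change operation at $x$ turns the positive smoothing at $x$ into the negative one and vice versa if $x$ is of type $1$, and does not change which smoothing is positive if $x$ is of type $2$. (3) The positive smoothing at $x$ is the one determined by the crossing of the $4$-crossing pattern of $x$ at which the overgoing arc of $R(D)$ enters the pattern; in particular, the actual direction of the undergoing arc of $D$ at $x$ and the actual labeling of the undergoing arcs of $D^2$ at $x$ do not affect which smoothing at $x$ is positive.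
   Context: $\Sigma\times[0,1]$ is the non-orientable $3$-manifold with fixed product structure; knots in it are represented by diagrams on $\Sigma$. A knot is pseudo-classical if it is an orientation-preserving loop in $\Sigma\times[0,1]$; then its diagram $D$ is an orientation-preserving loop in $\Sigma$. The $2$-cabling $D^2$ replaces $D$ by two parallel copies preserving over/under information; it has two components. A labeling of $D^2$ names one component $R(D)$ and the other $L(D)$; relabeling swaps the names; both components are oriented consistently with $D$. Each crossing $x$ of $D$ gives a pattern of $4$ crossings of $D^2$, which correspond bijectively to the four angles of $D$ at $x$. The input crossing $\mathrm{In}(x)$ is the crossing of the pattern at which both strands through it enter the pattern (traversing in the positive direction). The sign of $x$ is $1$ if $R(D)$ goes over $L(D)$ at $\mathrm{In}(x)$; $-1$ if $L(D)$ goes over $R(D)$ there; $i$ if $R(D)$ goes over itself there; $-i$ if $L(D)$ goes over itself there. $x$ is of type $1$ if $\operatorname{sign}(x)=\pm1$ and of type $2$ if $\operatorname{sign}(x)=\pm i$. A smoothing of $x$ pairs two opposite (vertical) angles at $x$, equivalently two diagonal crossings of the pattern; it is said to be determined by either of these crossings. The smoothing determined by $\mathrm{In}(x)$ is called along the orientation; the other is across the orientation. The positive smoothing at $x$ is the one along the orientation if $\operatorname{sign}(x)\in\{1,i\}$ and across the orientation if $\operatorname{sign}(x)\in\{-1,-i\}$; the other smoothing is negative. The crossing change at $x$ swaps over- and under-branches at $x$. *)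

theory Defs
  imports Complex_Main
begin

text \<open>Local combinatorial model of a crossing x of an oriented diagram D of a
pseudo-classical knot, together with the four-crossing pattern of x in the
2-cabling D^2 and a labeling of D^2.  We work in a small disk around x with a
chosen chart: the two branches of D through x are branch A (along the first
coordinate axis) and branch B (along the second coordinate axis).\<close>

datatype pm = P | M

fun neg :: "pm \<Rightarrow> pm" where
  "neg P = M" | "neg M = P"

datatype branch = A | B

datatype label = R | L

text \<open>An angle of D at x (equivalently, a crossing of the pattern): the pair
(side with respect to the first coordinate, side with respect to the second
coordinate).  The crossing of the pattern in angle (a,b) is the crossing of the
copy of branch B lying on side a with the copy of branch A lying on side b.\<close>
type_synonym angle = "pm \<times> pm"

text \<open>A strand of D^2 near x: a copy of a branch, given by the side on which it lies.\<close>
type_synonym strand = "branch \<times> pm"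

record crossing =
  dirA :: pm      \<comment> \<open>direction in which D traverses branch A (along first axis)\<close>
  dirB :: pm      \<comment> \<open>direction in which D traverses branch B (along second axis)\<close>
  sideRA :: pm    \<comment> \<open>side (second coordinate) of the copy of A belonging to R(D)\<close>
  sideRB :: pm    \<comment> \<open>side (first coordinate) of the copy of B belonging to R(D)\<close>
  overA :: bool

definition strand_label :: "crossing \<Rightarrow> strand \<Rightarrow> label" where
  "strand_label c s = (case s of
      (A, b) \<Rightarrow> (if b = sideRA c then R else L)
    | (B, a) \<Rightarrow> (if a = sideRB c then R else L))"

definition over_strand :: "crossing \<Rightarrow> angle \<Rightarrow> strand" where
  "over_strand c q = (if overA c then (A, snd q) else (B, fst q))"

definition under_strand :: "crossing \<Rightarrow> angle \<Rightarrow> strand" where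
  "under_strand c q = (if overA c then (B, fst q) else (A, snd q))"

text \<open>The crossing of the pattern at which a strand enters the pattern
(traversing in the positive direction).\<close>
definition entry :: "crossing \<Rightarrow> strand \<Rightarrow> angle" where
  "entry c s = (case s of
      (A, b) \<Rightarrow> (neg (dirA c), b)
    | (B, a) \<Rightarrow> (a, neg (dirB c)))"

definition In :: "crossing \<Rightarrow> angle" where
  "In c = (THE q. entry c (over_strand c q) = q \<and> entry c (under_strand c q) = q)"

definition sign :: "crossing \<Rightarrow> complex" where
  "sign c = (let q = In c;
                 ov = strand_label c (over_strand c q);
                 un = strand_label c (under_strand c q)
             in if ov = R \<and> un = L then 1
                else if ov = L \<and> un = R then -1
                else if ov = R \<and> un = R then \<i>
                else - \<i>)"

definition type1 :: "crossing \<Rightarrow> bool" where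
  "type1 c \<longleftrightarrow> sign c \<in> {1, -1}"

definition type2 :: "crossing \<Rightarrow> bool" where
  "type2 c \<longleftrightarrow> sign c \<in> {\<i>, -\<i>}"

definition opposite :: "angle \<Rightarrow> angle" where
  "opposite q = (neg (fst q), neg (snd q))"

text \<open>A smoothing at x pairs two opposite angles; it is determined by either.\<close>
definition smoothing_det :: "angle \<Rightarrow> angle set" where
  "smoothing_det q = {q, opposite q}"

definition smoothings :: "angle set set" where
  "smoothings = range smoothing_det"

definition along :: "crossing \<Rightarrow> angle set" where
  "along c = smoothing_det (In c)"

definition across :: "crossing \<Rightarrow> angle set" where
  "across c = (THE s. s \<in> smoothings \<and> s \<noteq> along c)"

definition positive_smoothing :: "crossing \<Rightarrow> angle set" where
  "positive_smoothing c = (if sign c \<in> {1, \<i>} then along c else across c)"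

definition negative_smoothing :: "crossing \<Rightarrow> angle set" where
  "negative_smoothing c = (if sign c \<in> {1, \<i>} then across c else along c)"

definition reverse_orientation :: "crossing \<Rightarrow> crossing" where
  "reverse_orientation c = c\<lparr>dirA := neg (dirA c), dirB := neg (dirB c)\<rparr>"

definition relabel :: "crossing \<Rightarrow> crossing" where
  "relabel c = c\<lparr>sideRA := neg (sideRA c), sideRB := neg (sideRB c)\<rparr>"

definition crossing_change :: "crossing \<Rightarrow> crossing" where
  "crossing_change c = c\<lparr>overA := \<not> overA c\<rparr>"

definition over_R_strand :: "crossing \<Rightarrow> strand" where
  "over_R_strand c = (if overA c then (A, sideRA c) else (B, sideRB c))"

definition same_over :: "crossing \<Rightarrow> crossing \<Rightarrow> bool" where
  "same_over c c' \<longleftrightarrow> overA c' = overA c \<and>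
     (if overA c then dirA c' = dirA c \<and> sideRA c' = sideRA c
      else dirB c' = dirB c \<and> sideRB c' = sideRB c)"

end

theory Submission
  imports Defs
begin

text \<open>The input crossing is the angle opposite to both directions of travel, and the two
smoothings are told apart by whether the two coordinates of an angle agree.  Whether the
positive smoothing is the one along the orientation depends only on the label of the
over-strand at the input crossing.  Reversing the orientation moves the input crossing to
the opposite angle, which determines the same smoothing but is passed by the other copy of
the over-branch; relabeling swaps all labels; a crossing change keeps the input crossing
and exchanges the over- and under-strand there, whose labels differ exactly at crossings
of type 1.  Finally, the copy of the over-branch belonging to R(D) enters the pattern at
the input crossing if it is labelled R there, and at an adjacent angle otherwise.\<close>

lemma neg_eq_iff [simp]: "neg x = y \<longleftrightarrow> x \<noteq> y"
  and eq_neg_iff [simp]: "x = neg y \<longleftrightarrow> x \<noteq> y"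
  by (cases x; cases y; simp)+

lemma In_eq: "In c = (neg (dirA c), neg (dirB c))"
  unfolding In_def
proof (rule the_equality)
  fix q assume "entry c (over_strand c q) = q \<and> entry c (under_strand c q) = q"
  then show "q = (neg (dirA c), neg (dirB c))"
    by (cases q) (auto simp: entry_def over_strand_def under_strand_def split: if_splits)
qed (simp add: entry_def over_strand_def under_strand_def)

lemma smoothing_det_eq_iff:
  "smoothing_det q = smoothing_det q' \<longleftrightarrow> (fst q = snd q \<longleftrightarrow> fst q' = snd q')"
  unfolding smoothing_det_def opposite_def
  by (cases q; cases q') (auto simp: doubleton_eq_iff; metis pm.exhaust)

lemma smoothing_det_opposite: "smoothing_det (opposite q) = smoothing_det q"
  by (cases q) (simp add: smoothing_det_eq_iff opposite_def)

lemma across_eqI: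
  assumes "smoothing_det q \<noteq> along c"
  shows "across c = smoothing_det q"
  unfolding across_def
proof (rule the_equality)
  fix s assume "s \<in> smoothings \<and> s \<noteq> along c"
  then obtain q' where "s = smoothing_det q'" "smoothing_det q' \<noteq> along c"
    by (auto simp: smoothings_def)
  with assms show "s = smoothing_det q"
    by (simp add: along_def smoothing_det_eq_iff)
qed (use assms in \<open>simp add: smoothings_def\<close>)

definition over_label :: "crossing \<Rightarrow> label" where
  "over_label c = strand_label c (over_strand c (In c))"

definition under_label :: "crossing \<Rightarrow> label" where
  "under_label c = strand_label c (under_strand c (In c))"

lemma sign_eq:
  "sign c = (case (over_label c, under_label c) of
       (R, L) \<Rightarrow> 1 | (L, R) \<Rightarrow> -1 | (R, R) \<Rightarrow> \<i> | (L, L) \<Rightarrow> - \<i>)"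
  by (cases "over_label c"; cases "under_label c";
      simp add: sign_def over_label_def under_label_def Let_def)

lemma sign_in_positive_iff: "sign c \<in> {1, \<i>} \<longleftrightarrow> over_label c = R"
  by (cases "over_label c"; cases "under_label c"; simp add: sign_eq complex_eq_iff)

lemma type1_iff: "type1 c \<longleftrightarrow> over_label c \<noteq> under_label c"
  by (cases "over_label c"; cases "under_label c"; simp add: type1_def sign_eq complex_eq_iff)

lemma type2_iff: "type2 c \<longleftrightarrow> over_label c = under_label c"
  by (cases "over_label c"; cases "under_label c"; simp add: type2_def sign_eq complex_eq_iff)

lemma positive_smoothing_eq:
  "positive_smoothing c = (if over_label c = R then along c else across c)"
  unfolding positive_smoothing_def sign_in_positive_iff by simp

lemma negative_smoothing_eq:
  "negative_smoothing c = (if over_label c = R then across c else along c)"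
  unfolding negative_smoothing_def sign_in_positive_iff by simp

lemma smoothings_swap:
  assumes "along c' = along c" and "over_label c' \<noteq> over_label c"
  shows "positive_smoothing c' = negative_smoothing c \<and>
    negative_smoothing c' = positive_smoothing c"
proof -
  have "across c' = across c"
    by (simp add: across_def assms(1))
  with assms show ?thesis
    by (cases "over_label c"; cases "over_label c'";
        simp add: positive_smoothing_eq negative_smoothing_eq)
qed

lemma smoothings_keep:
  assumes "along c' = along c" and "over_label c' = over_label c"
  shows "positive_smoothing c' = positive_smoothing c \<and>
    negative_smoothing c' = negative_smoothing c"
proof -
  have "across c' = across c"
    by (simp add: across_def assms(1))
  with assms show ?thesis
    by (simp add: positive_smoothing_eq negative_smoothing_eq)
qed

lemma In_reverse_orientation: "In (reverse_orientation c) = opposite (In c)"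
  by (simp add: In_eq reverse_orientation_def opposite_def)

lemma along_reverse_orientation: "along (reverse_orientation c) = along c"
  by (simp add: along_def In_reverse_orientation smoothing_det_opposite)

lemma over_label_reverse_orientation: "over_label (reverse_orientation c) \<noteq> over_label c"
  by (simp add: over_label_def In_reverse_orientation opposite_def In_eq over_strand_def
      strand_label_def reverse_orientation_def)

lemma along_relabel: "along (relabel c) = along c"
  by (simp add: along_def In_eq relabel_def)

lemma over_label_relabel: "over_label (relabel c) \<noteq> over_label c"
  by (simp add: over_label_def In_eq over_strand_def strand_label_def relabel_def)

lemma along_crossing_change: "along (crossing_change c) = along c"
  by (simp add: along_def In_eq crossing_change_def)

lemma over_label_crossing_change: "over_label (crossing_change c) = under_label c"
  by (simp add: over_label_def under_label_def In_eq over_strand_def under_strand_def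
      strand_label_def crossing_change_def)

lemma entry_over_R_strand_labelled_R:
  "over_label c = R \<Longrightarrow> entry c (over_R_strand c) = In c"
  by (cases "overA c";
      auto simp: over_label_def In_eq over_strand_def strand_label_def over_R_strand_def
        entry_def split: if_splits)

lemma entry_over_R_strand_labelled_L:
  "over_label c \<noteq> R \<Longrightarrow> smoothing_det (entry c (over_R_strand c)) \<noteq> along c"
  by (cases "overA c";
      auto simp: over_label_def In_eq over_strand_def strand_label_def over_R_strand_def
        entry_def along_def smoothing_det_eq_iff split: if_split_asm)

lemma positive_smoothing_entry_over_R_strand:
  "positive_smoothing c = smoothing_det (entry c (over_R_strand c))"
proof (cases "over_label c = R")
  case True
  then show ?thesis
    by (simp add: positive_smoothing_eq along_def entry_over_R_strand_labelled_R)
next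
  case False
  then show ?thesis
    by (simp add: positive_smoothing_eq across_eqI entry_over_R_strand_labelled_L)
qed

lemma same_over_entry_over_R_strand:
  "same_over c c' \<Longrightarrow> entry c' (over_R_strand c') = entry c (over_R_strand c)"
  by (simp add: same_over_def over_R_strand_def entry_def split: if_splits)

theorem lemma3:
  fixes c :: crossing
  shows
   "(positive_smoothing (reverse_orientation c) = negative_smoothing c \<and>
     negative_smoothing (reverse_orientation c) = positive_smoothing c \<and>
     positive_smoothing (relabel c) = negative_smoothing c \<and>
     negative_smoothing (relabel c) = positive_smoothing c) \<and>
    (type1 c \<longrightarrow>
       positive_smoothing (crossing_change c) = negative_smoothing c \<and>
       negative_smoothing (crossing_change c) = positive_smoothing c) \<and>
    (type2 c \<longrightarrow>
       positive_smoothing (crossing_change c) = positive_smoothing c \<and>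
       negative_smoothing (crossing_change c) = negative_smoothing c) \<and>
    positive_smoothing c = smoothing_det (entry c (over_R_strand c)) \<and>
    (\<forall>c'. same_over c c' \<longrightarrow> positive_smoothing c' = positive_smoothing c)"
proof (intro conjI impI allI)
  show "positive_smoothing (reverse_orientation c) = negative_smoothing c"
    "negative_smoothing (reverse_orientation c) = positive_smoothing c"
    using smoothings_swap[OF along_reverse_orientation over_label_reverse_orientation] by simp_all
  show "positive_smoothing (relabel c) = negative_smoothing c"
    "negative_smoothing (relabel c) = positive_smoothing c"
    using smoothings_swap[OF along_relabel over_label_relabel] by simp_all
  show "positive_smoothing (crossing_change c) = negative_smoothing c"
    "negative_smoothing (crossing_change c) = positive_smoothing c" if "type1 c"
    using smoothings_swap[OF along_crossing_change] that
    by (simp_all add: over_label_crossing_change type1_iff)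
  show "positive_smoothing (crossing_change c) = positive_smoothing c"
    "negative_smoothing (crossing_change c) = negative_smoothing c" if "type2 c"
    using smoothings_keep[OF along_crossing_change] that
    by (simp_all add: over_label_crossing_change type2_iff)
  show "positive_smoothing c = smoothing_det (entry c (over_R_strand c))"
    by (rule positive_smoothing_entry_over_R_strand)
  show "positive_smoothing c' = positive_smoothing c" if "same_over c c'" for c'
    using that by (simp add: positive_smoothing_entry_over_R_strand same_over_entry_over_R_strand)
qed

end
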